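(* Let $G=(V,w,m)$ be a finite connected weighted graph satisfying $CD(K,\infty)$ for some $K>0$, let $0=\lambda_0<\lambda_1\le\lambda_2\le\dots$ be the eigenvalues of $-\Delta$ counted with multiplicity, and suppose $\lambda_{\deg_{\max}}=K$. Then for every $x_0\in V$ the function $f=d(x_0,\cdot)$ satisfies $\Gamma_2f=K\Gamma f$ on $V$.
   Context: A weighted graph is $G=(V,w,m)$ with $V$ countable, $w:V\times V\to[0,\infty)$ symmetric with $w(x,x)=0$, $m:V\to(0,\infty)$; $x\sim y$ iff $w(x,y)>0$. Laplacian $\Delta f(x)=\frac1{m(x)}\sum_yw(x,y)(f(y)-f(x))$, self-adjoint on $\ell^2(V,m)$. $\deg(x)=\#\{y:y\sim x\}$, $\deg_{\max}=\max_x\deg(x)$. $d$ is the combinatorial distance. $2\Gamma(f,g)=\Delta(fg)-f\Delta g-g\Delta f$, $2\Gamma_2(f,g)=\Delta\Gamma(f,g)-\Gamma(f,\Delta g)-\Gamma(g,\Delta f)$, $\Gamma f=\Gamma(f,f)$, $\Gamma_2f=\Gamma_2(f,f)$; $CD(K,\infty)$ means $\Gamma_2f(y)\ge K\Gamma f(y)$ for all $f$ and $y$. *)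

theory Defs
  imports "HOL-Analysis.Analysis"
begin

definition weighted_graph :: "('v \<Rightarrow> 'v \<Rightarrow> real) \<Rightarrow> ('v \<Rightarrow> real) \<Rightarrow> bool" where
  "weighted_graph w m \<longleftrightarrow>
     (\<forall>x y. w x y \<ge> 0) \<and> (\<forall>x y. w x y = w y x) \<and> (\<forall>x. w x x = 0) \<and> (\<forall>x. m x > 0)"

definition adj :: "('v \<Rightarrow> 'v \<Rightarrow> real) \<Rightarrow> ('v \<times> 'v) set" where
  "adj w = {(x, y). w x y > 0}"

definition connected_graph :: "('v \<Rightarrow> 'v \<Rightarrow> real) \<Rightarrow> bool" where
  "connected_graph w \<longleftrightarrow> (\<forall>x y. (x, y) \<in> (adj w)\<^sup>*)"

definition comb_dist :: "('v \<Rightarrow> 'v \<Rightarrow> real) \<Rightarrow> 'v \<Rightarrow> 'v \<Rightarrow> nat" where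
  "comb_dist w x y = (LEAST n. (x, y) \<in> (adj w) ^^ n)"

definition deg :: "('v \<Rightarrow> 'v \<Rightarrow> real) \<Rightarrow> 'v \<Rightarrow> nat" where
  "deg w x = card {y. w x y > 0}"

definition deg_max :: "('v::finite \<Rightarrow> 'v \<Rightarrow> real) \<Rightarrow> nat" where
  "deg_max w = Max (range (deg w))"

definition lap :: "('v::finite \<Rightarrow> 'v \<Rightarrow> real) \<Rightarrow> ('v \<Rightarrow> real) \<Rightarrow> ('v \<Rightarrow> real) \<Rightarrow> 'v \<Rightarrow> real" where
  "lap w m f x = (1 / m x) * (\<Sum>y\<in>UNIV. w x y * (f y - f x))"

definition Gam :: "('v::finite \<Rightarrow> 'v \<Rightarrow> real) \<Rightarrow> ('v \<Rightarrow> real) \<Rightarrow> ('v \<Rightarrow> real) \<Rightarrow> ('v \<Rightarrow> real) \<Rightarrow> 'v \<Rightarrow> real" where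
  "Gam w m f g x = (lap w m (\<lambda>y. f y * g y) x - f x * lap w m g x - g x * lap w m f x) / 2"

definition Gam2 :: "('v::finite \<Rightarrow> 'v \<Rightarrow> real) \<Rightarrow> ('v \<Rightarrow> real) \<Rightarrow> ('v \<Rightarrow> real) \<Rightarrow> ('v \<Rightarrow> real) \<Rightarrow> 'v \<Rightarrow> real" where
  "Gam2 w m f g x = (lap w m (Gam w m f g) x - Gam w m f (lap w m g) x - Gam w m g (lap w m f) x) / 2"

definition CD_inf :: "('v::finite \<Rightarrow> 'v \<Rightarrow> real) \<Rightarrow> ('v \<Rightarrow> real) \<Rightarrow> real \<Rightarrow> bool" where
  "CD_inf w m K \<longleftrightarrow> (\<forall>f y. Gam2 w m f f y \<ge> K * Gam w m f f y)"

definition neg_lap_vec :: "('v::finite \<Rightarrow> 'v \<Rightarrow> real) \<Rightarrow> ('v \<Rightarrow> real) \<Rightarrow> real ^ 'v \<Rightarrow> real ^ 'v" where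
  "neg_lap_vec w m f = (\<chi> x. - lap w m (\<lambda>y. f $ y) x)"

definition eigenspace_nl :: "('v::finite \<Rightarrow> 'v \<Rightarrow> real) \<Rightarrow> ('v \<Rightarrow> real) \<Rightarrow> real \<Rightarrow> (real ^ 'v) set" where
  "eigenspace_nl w m l = {f. neg_lap_vec w m f = l *\<^sub>R f}"

definition eigenvalues_nl :: "('v::finite \<Rightarrow> 'v \<Rightarrow> real) \<Rightarrow> ('v \<Rightarrow> real) \<Rightarrow> real set" where
  "eigenvalues_nl w m = {l. \<exists>f. f \<noteq> 0 \<and> neg_lap_vec w m f = l *\<^sub>R f}"

text \<open>Eigenvalues of -\<Delta> in nondecreasing order, each repeated according to its multiplicity
  (dimension of the eigenspace; -\<Delta> is self-adjoint on l^2(V,m)). Index 0 is \<lambda>_0.\<close>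
definition eig_list :: "('v::finite \<Rightarrow> 'v \<Rightarrow> real) \<Rightarrow> ('v \<Rightarrow> real) \<Rightarrow> real list" where
  "eig_list w m = concat (map (\<lambda>l. replicate (dim (eigenspace_nl w m l)) l)
                               (sorted_list_of_set (eigenvalues_nl w m)))"

end

theory Submission
  imports Defs
begin

text \<open>
  Integrating the \<open>CD(K,\<infinity>)\<close> inequality against an eigenfunction of \<open>-\<Delta>\<close> with eigenvalue
  \<open>\<lambda>\<close> gives \<open>\<lambda> (\<lambda> - K) \<ge> 0\<close>: no eigenvalue lies strictly between 0 and \<open>K\<close>, the eigenvalue 0
  is simple by connectedness, and every eigenfunction for \<open>K\<close> satisfies \<open>\<Gamma>\<^sub>2 = K \<Gamma>\<close> pointwise.
  Thus \<open>\<lambda>\<^bsub>deg_max\<^esub> = K\<close> forces \<open>dim E\<^sub>K \<ge> deg_max \<ge> deg x\<^sub>0\<close> (counting eigenvalues with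
  multiplicity needs the spectral theorem for the symmetrised Laplacian, obtained by maximising
  the Rayleigh quotient).

  A function with \<open>\<Gamma>\<^sub>2 = K \<Gamma>\<close> whose gradient vanishes at one vertex has vanishing gradient at
  all neighbours, hence everywhere. So an eigenfunction for \<open>K\<close> is determined by its increments
  from \<open>x\<^sub>0\<close> to the neighbours of \<open>x\<^sub>0\<close>; by dimension count every choice of increments occurs, in
  particular all increments 1. For such an \<open>f\<close>, perturbing \<open>f\<close> at a vertex \<open>z\<close> at distance 2
  from \<open>x\<close> and using \<open>CD(K,\<infinity>)\<close> at \<open>x\<close> shows that the weighted mean of
  \<open>f z - 2 f y + f x\<close> over the common neighbours \<open>y\<close> vanishes. Inductively \<open>f - f x\<^sub>0 = d(x\<^sub>0, \<cdot>)\<close>,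
  which therefore satisfies \<open>\<Gamma>\<^sub>2 = K \<Gamma>\<close>.
\<close>

lemma nonneg_linear_quadratic_imp_zero:
  fixes a b :: real
  assumes "\<And>t. 0 \<le> a * t + b * t\<^sup>2"
  shows "a = 0"
proof (rule ccontr)
  assume "a \<noteq> 0"
  define c where "c = \<bar>b\<bar> + 1"
  have c: "c > 0" "b \<le> c" by (auto simp: c_def)
  define t where "t = - a / (2 * c)"
  have "a * t + b * t\<^sup>2 \<le> a * t + c * t\<^sup>2"
    using c by (simp add: mult_right_mono)
  also have "\<dots> = - a\<^sup>2 / (4 * c)"
    using c by (simp add: t_def power2_eq_square field_simps)
  also have "\<dots> < 0"
    using \<open>a \<noteq> 0\<close> c by (simp add: divide_neg_pos)
  finally show False using assms[of t] by linarith
qed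

section \<open>Self-adjoint operators on Euclidean space\<close>

lemma selfadjoint_invariant_subspace_has_eigenvector:
  fixes A :: "'a::euclidean_space \<Rightarrow> 'a"
  assumes lin: "linear A" and selfadjoint: "\<And>x y. A x \<bullet> y = x \<bullet> A y"
    and V: "subspace V" "A ` V \<subseteq> V" "V \<noteq> {0}"
  obtains u c where "u \<in> V" "u \<noteq> 0" "A u = c *\<^sub>R u"
proof -
  define q where "q x = A x \<bullet> x" for x
  define S where "S = V \<inter> sphere 0 1"
  have compact: "compact S"
    unfolding S_def by (intro closed_Int_compact closed_subspace V(1) compact_sphere)
  obtain v where "v \<in> V" "v \<noteq> 0" using V(1,3) subspace_0 by blast
  then have "v /\<^sub>R norm v \<in> S" using V(1) by (simp add: S_def subspace_scale)
  then have nonempty: "S \<noteq> {}" by blast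
  have "continuous_on S A"
    using lin by (simp add: linear_continuous_on linear_conv_bounded_linear)
  then have "continuous_on S q"
    unfolding q_def by (intro continuous_on_inner continuous_on_id)
  then obtain u where u: "u \<in> S" and max: "\<And>y. y \<in> S \<Longrightarrow> q y \<le> q u"
    using continuous_attains_sup[OF compact nonempty] by blast
  define M where "M = q u"
  have uV: "u \<in> V" and u_unit: "u \<bullet> u = 1"
    using u by (simp_all add: S_def dot_square_norm)
  \<comment> \<open>the Rayleigh quotient is maximal at u, so its first variation vanishes along V\<close>
  have q_le: "q y \<le> M * (y \<bullet> y)" if "y \<in> V" for y
  proof (cases "y = 0")
    case False
    then have "y /\<^sub>R norm y \<in> S" using that V(1) by (simp add: S_def subspace_scale)
    then have "q (y /\<^sub>R norm y) \<le> M" by (simp add: M_def max)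
    moreover have "q (y /\<^sub>R norm y) = q y / (y \<bullet> y)"
      using lin by (simp add: q_def linear_scale dot_square_norm power2_eq_square divide_inverse)
    ultimately show ?thesis using False by (simp add: divide_le_eq)
  qed (simp add: q_def linear_0[OF lin])
  have first_variation: "A u \<bullet> v = M * (u \<bullet> v)" if "v \<in> V" for v
  proof -
    have "0 \<le> (2 * M * (u \<bullet> v) - 2 * (A u \<bullet> v)) * t + (M * (v \<bullet> v) - q v) * t\<^sup>2" for t
    proof -
      have "A v \<bullet> u = A u \<bullet> v" using selfadjoint[of v u] by (simp add: inner_commute)
      then have q_expand: "q (u + t *\<^sub>R v) = M + 2 * (A u \<bullet> v) * t + q v * t\<^sup>2"
        by (simp add: q_def M_def linear_add[OF lin] linear_scale[OF lin] inner_add_left inner_add_right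
            power2_eq_square algebra_simps)
      have norm_expand: "(u + t *\<^sub>R v) \<bullet> (u + t *\<^sub>R v) = 1 + 2 * (u \<bullet> v) * t + (v \<bullet> v) * t\<^sup>2"
        using u_unit by (simp add: inner_add_left inner_add_right inner_commute[of v u]
            power2_eq_square algebra_simps)
      have "u + t *\<^sub>R v \<in> V" using uV that V(1) by (simp add: subspace_add subspace_scale)
      from q_le[OF this] have "M + 2 * (A u \<bullet> v) * t + q v * t\<^sup>2 \<le> M * (1 + 2 * (u \<bullet> v) * t + (v \<bullet> v) * t\<^sup>2)"
        unfolding q_expand norm_expand .
      then show ?thesis by (simp add: algebra_simps)
    qed
    from nonneg_linear_quadratic_imp_zero[OF this] show ?thesis by simp
  qed
  define r where "r = A u - M *\<^sub>R u"
  have "r \<in> V" using uV V by (auto simp: r_def subspace_diff subspace_scale)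
  then have "r \<bullet> r = 0"
    using first_variation by (simp add: r_def inner_diff_left)
  then have "A u = M *\<^sub>R u" by (simp add: r_def)
  moreover have "u \<noteq> 0" using u_unit by auto
  ultimately show ?thesis using that uV by blast
qed

lemma selfadjoint_span_eigenvectors:
  fixes A :: "'a::euclidean_space \<Rightarrow> 'a"
  assumes lin: "linear A" and selfadjoint: "\<And>x y. A x \<bullet> y = x \<bullet> A y"
  shows "span {u. \<exists>c. A u = c *\<^sub>R u} = UNIV"
proof (rule ccontr)
  let ?E = "{u. \<exists>c. A u = c *\<^sub>R u}"
  define V where "V = {y. \<forall>x\<in>span ?E. orthogonal x y}"
  assume "span ?E \<noteq> UNIV"
  then have "dim ?E < DIM('a)" using dim_subset_UNIV[of ?E] dim_eq_full[of ?E] by linarith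
  then obtain z where "z \<noteq> 0" "\<And>y. y \<in> span ?E \<Longrightarrow> orthogonal z y"
    using orthogonal_to_subspace_exists by blast
  then have "z \<in> V" "z \<noteq> 0" by (auto simp: V_def orthogonal_commute)
  then have "V \<noteq> {0}" by blast
  have A_span: "A ` span ?E \<subseteq> span ?E"
  proof -
    have "A ` ?E \<subseteq> ?E" using lin by (auto simp: linear_scale)
    then show ?thesis by (simp add: linear_span_image[OF lin, symmetric] span_mono)
  qed
  have "A ` V \<subseteq> V"
  proof (clarsimp simp: V_def orthogonal_def)
    fix y x assume "\<forall>x\<in>span ?E. x \<bullet> y = 0" and "x \<in> span ?E"
    moreover from \<open>x \<in> span ?E\<close> have "A x \<in> span ?E" using A_span by blast
    ultimately show "x \<bullet> A y = 0" by (simp add: selfadjoint[symmetric])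
  qed
  moreover have "subspace V" unfolding V_def by (rule subspace_orthogonal_to_vectors)
  ultimately obtain u c where "u \<in> V" "u \<noteq> 0" "A u = c *\<^sub>R u"
    using selfadjoint_invariant_subspace_has_eigenvector[OF lin selfadjoint] \<open>V \<noteq> {0}\<close> by blast
  moreover from this have "u \<in> span ?E" by (intro span_base) auto
  ultimately have "u \<bullet> u = 0" by (simp add: V_def orthogonal_def)
  with \<open>u \<noteq> 0\<close> show False by simp
qed

lemma selfadjoint_finite_eigenvalues:
  fixes A :: "'a::euclidean_space \<Rightarrow> 'a"
  assumes selfadjoint: "\<And>x y. A x \<bullet> y = x \<bullet> A y"
  shows "finite {c. \<exists>u. u \<noteq> 0 \<and> A u = c *\<^sub>R u}"
proof -
  let ?L = "{c. \<exists>u. u \<noteq> 0 \<and> A u = c *\<^sub>R u}"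
  define e where "e c = (SOME u. u \<noteq> 0 \<and> A u = c *\<^sub>R u)" for c
  have e: "e c \<noteq> 0" "A (e c) = c *\<^sub>R e c" if "c \<in> ?L" for c
    using someI_ex[OF that[simplified]] by (simp_all add: e_def)
  have inj: "inj_on e ?L"
    by (rule inj_onI) (metis e scaleR_cancel_right)
  have "e c \<bullet> e c' = 0" if "c \<in> ?L" "c' \<in> ?L" "c \<noteq> c'" for c c'
  proof -
    have "c * (e c \<bullet> e c') = c' * (e c \<bullet> e c')"
      using selfadjoint[of "e c" "e c'"] e[OF that(1)] e[OF that(2)] by simp
    then show ?thesis using \<open>c \<noteq> c'\<close> by simp
  qed
  then have "pairwise orthogonal (e ` ?L)"
    by (auto simp: pairwise_def orthogonal_def)
  moreover have "0 \<notin> e ` ?L" using e(1) by fastforce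
  ultimately have "independent (e ` ?L)" by (intro pairwise_orthogonal_independent)
  then have "finite (e ` ?L)" by (rule independent_bound[THEN conjunct1])
  then show ?thesis using inj finite_imageD by blast
qed

lemma dim_UN_le_sum:
  fixes E :: "'i \<Rightarrow> 'a::euclidean_space set"
  assumes "finite I"
  shows "dim (\<Union>i\<in>I. E i) \<le> (\<Sum>i\<in>I. dim (E i))"
proof -
  have "\<forall>i. \<exists>B. E i \<subseteq> span B \<and> independent B \<and> card B = dim (E i)"
    using basis_exists by metis
  then obtain B where B: "\<And>i. E i \<subseteq> span (B i)" "\<And>i. independent (B i)" "\<And>i. card (B i) = dim (E i)"
    by metis
  have "(\<Union>i\<in>I. E i) \<subseteq> span (\<Union>i\<in>I. B i)"
    using B(1) span_mono[of _ "\<Union>i\<in>I. B i"] by blast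
  moreover have "finite (\<Union>i\<in>I. B i)" using assms B(2) independent_bound by blast
  ultimately have "dim (\<Union>i\<in>I. E i) \<le> card (\<Union>i\<in>I. B i)" by (rule dim_le_card)
  also have "\<dots> \<le> (\<Sum>i\<in>I. card (B i))" by (rule card_UN_le[OF assms])
  finally show ?thesis by (simp add: B(3))
qed

lemma selfadjoint_DIM_le_sum_dim_eigenspaces:
  fixes A :: "'a::euclidean_space \<Rightarrow> 'a"
  assumes lin: "linear A" and selfadjoint: "\<And>x y. A x \<bullet> y = x \<bullet> A y"
  shows "DIM('a) \<le> (\<Sum>c\<in>{c. \<exists>u. u \<noteq> 0 \<and> A u = c *\<^sub>R u}. dim {u. A u = c *\<^sub>R u})"
proof -
  let ?L = "{c. \<exists>u. u \<noteq> 0 \<and> A u = c *\<^sub>R u}"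
  let ?U = "\<Union>c\<in>?L. {u. A u = c *\<^sub>R u}"
  have "{u. \<exists>c. A u = c *\<^sub>R u} \<subseteq> insert 0 ?U" by blast
  also have "\<dots> \<subseteq> span ?U" by (simp add: span_0 span_superset)
  finally have eigenvectors_span: "{u. \<exists>c. A u = c *\<^sub>R u} \<subseteq> span ?U" .
  have "DIM('a) = dim (span {u. \<exists>c. A u = c *\<^sub>R u})"
    by (simp add: selfadjoint_span_eigenvectors[OF lin selfadjoint])
  also have "\<dots> \<le> dim ?U"
    using dim_subset[OF eigenvectors_span] by (simp add: dim_span)
  also have "\<dots> \<le> (\<Sum>c\<in>?L. dim {u. A u = c *\<^sub>R u})"
    by (rule dim_UN_le_sum[OF selfadjoint_finite_eigenvalues[OF selfadjoint]])
  finally show ?thesis .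
qed

lemma conjugate_eigenvector_iff:
  fixes A P Q :: "'a::euclidean_space \<Rightarrow> 'a"
  assumes "linear P" "linear Q" "\<And>x. P (Q x) = x" "\<And>x. Q (P x) = x"
  shows "P (A (Q v)) = c *\<^sub>R v \<longleftrightarrow> A (Q v) = c *\<^sub>R Q v"
proof
  assume "P (A (Q v)) = c *\<^sub>R v"
  then have "Q (P (A (Q v))) = Q (c *\<^sub>R v)" by simp
  then show "A (Q v) = c *\<^sub>R Q v" using assms(2,4) by (simp add: linear_scale)
next
  assume "A (Q v) = c *\<^sub>R Q v"
  then show "P (A (Q v)) = c *\<^sub>R v" using assms(1,3) by (simp add: linear_scale)
qed

lemma eigenspace_conjugate:
  fixes A P Q :: "'a::euclidean_space \<Rightarrow> 'a"
  assumes "linear P" "linear Q" "\<And>x. P (Q x) = x" "\<And>x. Q (P x) = x"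
  shows "{u. A u = c *\<^sub>R u} = Q ` {v. P (A (Q v)) = c *\<^sub>R v}"
proof (intro equalityI subsetI)
  fix u assume "u \<in> {u. A u = c *\<^sub>R u}"
  then have "P u \<in> {v. P (A (Q v)) = c *\<^sub>R v}"
    by (simp add: conjugate_eigenvector_iff[OF assms] assms(4))
  then show "u \<in> Q ` {v. P (A (Q v)) = c *\<^sub>R v}" by (rule image_eqI[rotated]) (simp add: assms(4))
next
  fix u assume "u \<in> Q ` {v. P (A (Q v)) = c *\<^sub>R v}"
  then obtain v where "P (A (Q v)) = c *\<^sub>R v" "u = Q v" by blast
  then show "u \<in> {u. A u = c *\<^sub>R u}" by (simp add: conjugate_eigenvector_iff[OF assms])
qed

lemma conjugate_eigenvalues_and_dims:
  fixes A P Q :: "'a::euclidean_space \<Rightarrow> 'a"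
  assumes "linear P" "linear Q" "\<And>x. P (Q x) = x" "\<And>x. Q (P x) = x"
  shows "{c. \<exists>u. u \<noteq> 0 \<and> A u = c *\<^sub>R u} = {c. \<exists>v. v \<noteq> 0 \<and> P (A (Q v)) = c *\<^sub>R v}"
    and "dim {u. A u = c *\<^sub>R u} = dim {v. P (A (Q v)) = c *\<^sub>R v}"
proof -
  have inj: "inj Q" using assms(3) by (rule inj_on_inverseI)
  have Q0: "Q v = 0 \<longleftrightarrow> v = 0" for v
    using assms(3)[of v] linear_0[OF assms(1)] linear_0[OF assms(2)] by auto
  show "{c. \<exists>u. u \<noteq> 0 \<and> A u = c *\<^sub>R u} = {c. \<exists>v. v \<noteq> 0 \<and> P (A (Q v)) = c *\<^sub>R v}"
  proof (intro Collect_cong iffI)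
    fix c assume "\<exists>u. u \<noteq> 0 \<and> A u = c *\<^sub>R u"
    then obtain u where "u \<noteq> 0" "A u = c *\<^sub>R u" by blast
    then have "P u \<noteq> 0" "P (A (Q (P u))) = c *\<^sub>R P u"
      using Q0[of "P u"] by (simp_all add: assms(4) conjugate_eigenvector_iff[OF assms] linear_scale[OF assms(1)])
    then show "\<exists>v. v \<noteq> 0 \<and> P (A (Q v)) = c *\<^sub>R v" by blast
  next
    fix c assume "\<exists>v. v \<noteq> 0 \<and> P (A (Q v)) = c *\<^sub>R v"
    then obtain v where "v \<noteq> 0" "P (A (Q v)) = c *\<^sub>R v" by blast
    then have "Q v \<noteq> 0" "A (Q v) = c *\<^sub>R Q v"
      using Q0[of v] by (simp_all add: conjugate_eigenvector_iff[OF assms])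
    then show "\<exists>u. u \<noteq> 0 \<and> A u = c *\<^sub>R u" by blast
  qed
  show "dim {u. A u = c *\<^sub>R u} = dim {v. P (A (Q v)) = c *\<^sub>R v}"
    unfolding eigenspace_conjugate[OF assms, where A = A]
    by (rule dim_image_eq[OF assms(2) inj_on_subset[OF inj subset_UNIV]])
qed

lemma dim_vanishing_outside_le:
  "dim {v :: real ^ 'n. \<forall>i. i \<notin> N \<longrightarrow> v $ i = 0} \<le> card N"
proof -
  have "{v :: real ^ 'n. \<forall>i. i \<notin> N \<longrightarrow> v $ i = 0} \<subseteq> span ((\<lambda>i. axis i 1) ` N)"
  proof
    fix v :: "real ^ 'n" assume v: "v \<in> {v. \<forall>i. i \<notin> N \<longrightarrow> v $ i = 0}"
    have "v = (\<Sum>i\<in>UNIV. v $ i *\<^sub>R axis i 1)"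
      using basis_expansion[of v] by (simp add: scalar_mult_eq_scaleR)
    also have "\<dots> \<in> span ((\<lambda>i. axis i 1) ` N)"
    proof (intro span_sum)
      fix i
      show "v $ i *\<^sub>R axis i 1 \<in> span ((\<lambda>i. axis i 1) ` N)"
        using v by (cases "i \<in> N") (simp_all add: span_scale span_base span_0)
    qed
    finally show "v \<in> span ((\<lambda>i. axis i 1) ` N)" .
  qed
  then have "dim {v :: real ^ 'n. \<forall>i. i \<notin> N \<longrightarrow> v $ i = 0} \<le> card ((\<lambda>i. axis i (1::real)) ` N)"
    by (rule dim_le_card) simp
  also have "\<dots> \<le> card N" by (rule card_image_le) simp
  finally show ?thesis .
qed

section \<open>Calculus on a finite weighted graph\<close>

lemma lap_eq: "lap w m f x = (\<Sum>y\<in>UNIV. w x y * (f y - f x)) / m x"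
  by (simp add: lap_def)

lemma Gam_eq: "Gam w m f g x = (\<Sum>y\<in>UNIV. w x y * (f y - f x) * (g y - g x)) / (2 * m x)"
proof -
  have "(\<Sum>y\<in>UNIV. w x y * (f y * g y - f x * g x))
        - f x * (\<Sum>y\<in>UNIV. w x y * (g y - g x)) - g x * (\<Sum>y\<in>UNIV. w x y * (f y - f x))
      = (\<Sum>y\<in>UNIV. w x y * (f y - f x) * (g y - g x))"
    by (simp add: sum_distrib_left sum_subtractf[symmetric] algebra_simps)
  then show ?thesis
    by (simp add: Gam_def lap_eq diff_divide_distrib[symmetric])
qed

lemma Gam_commute: "Gam w m f g = Gam w m g f"
  by (simp add: Gam_eq fun_eq_iff mult_ac)

lemma Gam2_self_eq: "Gam2 w m f f x = lap w m (Gam w m f f) x / 2 - Gam w m f (lap w m f) x"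
  by (simp add: Gam2_def diff_divide_distrib)

lemma lap_add: "lap w m (\<lambda>y. f y + g y) x = lap w m f x + lap w m g x"
  by (simp add: lap_eq sum.distrib[symmetric] add_divide_distrib[symmetric] algebra_simps)

lemma lap_scale: "lap w m (\<lambda>y. c * f y) x = c * lap w m f x"
  by (simp add: lap_eq sum_distrib_left algebra_simps)

lemma linear_neg_lap_vec: "linear (neg_lap_vec w m)"
  by (rule linearI) (simp_all add: neg_lap_vec_def vec_eq_iff lap_add lap_scale)

lemma eigenspace_nl_iff:
  "f \<in> eigenspace_nl w m l \<longleftrightarrow> (\<forall>x. lap w m (\<lambda>y. f $ y) x = - l * f $ x)"
  by (auto simp: eigenspace_nl_def neg_lap_vec_def vec_eq_iff minus_equation_iff)

lemma subspace_eigenspace_nl: "subspace (eigenspace_nl w m l)"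
  unfolding subspace_def eigenspace_nl_def
  by (simp add: linear_add[OF linear_neg_lap_vec] linear_scale[OF linear_neg_lap_vec]
      linear_0[OF linear_neg_lap_vec] scaleR_add_right)

definition CD_extremal ::
    "('v::finite \<Rightarrow> 'v \<Rightarrow> real) \<Rightarrow> ('v \<Rightarrow> real) \<Rightarrow> real \<Rightarrow> ('v \<Rightarrow> real) \<Rightarrow> bool" where
  "CD_extremal w m K f \<longleftrightarrow> (\<forall>x. Gam2 w m f f x = K * Gam w m f f x)"

lemma lap_fun_upd:
  assumes "y \<noteq> z"
  shows "lap w m (g(z := g z + t)) y = lap w m g y + w y z * t / m y"
proof -
  have "(\<Sum>u\<in>UNIV. w y u * ((g(z := g z + t)) u - (g(z := g z + t)) y))
      = (\<Sum>u\<in>UNIV. w y u * (g u - g y) + (if u = z then w y z * t else 0))"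
    using assms by (intro sum.cong) (auto simp: algebra_simps)
  then show ?thesis by (simp add: lap_eq sum.distrib add_divide_distrib)
qed

lemma Gam_fun_upd:
  assumes "y \<noteq> z"
  shows "Gam w m (g(z := g z + t)) (g(z := g z + t)) y
       = Gam w m g g y + w y z * (2 * t * (g z - g y) + t\<^sup>2) / (2 * m y)"
proof -
  have "(\<Sum>u\<in>UNIV. w y u * ((g(z := g z + t)) u - (g(z := g z + t)) y) * ((g(z := g z + t)) u - (g(z := g z + t)) y))
      = (\<Sum>u\<in>UNIV. w y u * (g u - g y) * (g u - g y)
           + (if u = z then w y z * (2 * t * (g z - g y) + t\<^sup>2) else 0))"
    using assms by (intro sum.cong) (auto simp: power2_eq_square algebra_simps)
  then show ?thesis by (simp add: Gam_eq sum.distrib add_divide_distrib)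
qed

lemma lap_add_const: "lap w m (\<lambda>x. f x + c) = lap w m f"
  by (simp add: lap_def fun_eq_iff)

lemma Gam_add_const: "Gam w m (\<lambda>x. f x + c) (\<lambda>x. f x + c) = Gam w m f f"
  and Gam_lap_add_const: "Gam w m (\<lambda>x. f x + c) (lap w m (\<lambda>x. f x + c)) = Gam w m f (lap w m f)"
  by (simp_all add: Gam_eq lap_add_const fun_eq_iff)

lemma CD_extremal_add_const: "CD_extremal w m K (\<lambda>x. f x + c) \<longleftrightarrow> CD_extremal w m K f"
  by (simp add: CD_extremal_def Gam2_self_eq Gam_add_const Gam_lap_add_const)

locale fin_weighted_graph =
  fixes w :: "'v::finite \<Rightarrow> 'v \<Rightarrow> real" and m :: "'v \<Rightarrow> real"
  assumes weighted_graph: "weighted_graph w m"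
begin

lemma w_nonneg [simp]: "w x y \<ge> 0"
  and w_sym: "w x y = w y x"
  and m_pos [simp]: "m x > 0"
  using weighted_graph by (simp_all add: weighted_graph_def)

lemma m_nonneg [simp]: "m x \<ge> 0" and m_neq_0 [simp]: "m x \<noteq> 0"
  using m_pos[of x] by linarith+

lemma w_pos_iff: "w x y > 0 \<longleftrightarrow> w x y \<noteq> 0"
  using w_nonneg[of x y] by linarith

lemma Gam_self_nonneg: "Gam w m f f x \<ge> 0"
  using m_pos[of x] w_nonneg
  by (auto simp: Gam_eq mult.assoc intro!: divide_nonneg_pos sum_nonneg)

lemma Gam_self_eq_0_iff: "Gam w m f f x = 0 \<longleftrightarrow> (\<forall>y. w x y > 0 \<longrightarrow> f y = f x)"
proof -
  have "Gam w m f f x = 0 \<longleftrightarrow> (\<forall>y\<in>UNIV. w x y * ((f y - f x) * (f y - f x)) = 0)"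
    using m_pos[of x] w_nonneg
    by (simp add: Gam_eq mult.assoc sum_nonneg_eq_0_iff)
  then show ?thesis by (auto simp: w_pos_iff)
qed

lemma sum_mult_lap: "(\<Sum>x\<in>UNIV. m x * (f x * lap w m g x)) = - (\<Sum>x\<in>UNIV. m x * Gam w m f g x)"
proof -
  let ?T = "\<Sum>x\<in>UNIV. \<Sum>y\<in>UNIV. w x y * (f x * (g y - g x))"
  have "m x * (f x * lap w m g x) = f x * (\<Sum>y\<in>UNIV. w x y * (g y - g x))" for x
    using m_pos[of x] by (simp add: lap_eq)
  then have lhs: "(\<Sum>x\<in>UNIV. m x * (f x * lap w m g x)) = ?T"
    by (simp add: sum_distrib_left mult_ac)
  \<comment> \<open>symmetrise the double sum by swapping x and y\<close>
  have swap: "?T = (\<Sum>x\<in>UNIV. \<Sum>y\<in>UNIV. w x y * (f y * (g x - g y)))"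
    by (subst sum.swap) (simp add: w_sym)
  have "?T + ?T = (\<Sum>x\<in>UNIV. \<Sum>y\<in>UNIV. w x y * (f x * (g y - g x)) + w x y * (f y * (g x - g y)))"
    by (subst (2) swap) (simp add: sum.distrib)
  also have "\<dots> = - (\<Sum>x\<in>UNIV. \<Sum>y\<in>UNIV. w x y * (f y - f x) * (g y - g x))"
    by (simp add: sum_negf[symmetric] algebra_simps)
  also have "\<dots> = - 2 * (\<Sum>x\<in>UNIV. m x * Gam w m f g x)"
    using m_pos by (simp add: Gam_eq sum_divide_distrib[symmetric] less_imp_neq[symmetric])
  finally show ?thesis using lhs by simp
qed

lemma sum_lap: "(\<Sum>x\<in>UNIV. m x * lap w m g x) = 0"
  using sum_mult_lap[of "\<lambda>_. 1" g] by (simp add: Gam_eq)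

lemma sum_mult_lap_commute:
  "(\<Sum>x\<in>UNIV. m x * (f x * lap w m g x)) = (\<Sum>x\<in>UNIV. m x * (g x * lap w m f x))"
  by (simp add: sum_mult_lap Gam_commute)

lemma sum_Gam2_self: "(\<Sum>x\<in>UNIV. m x * Gam2 w m f f x) = (\<Sum>x\<in>UNIV. m x * (lap w m f x)\<^sup>2)"
proof -
  have "(\<Sum>x\<in>UNIV. m x * Gam2 w m f f x)
      = (\<Sum>x\<in>UNIV. m x * lap w m (Gam w m f f) x) / 2 - (\<Sum>x\<in>UNIV. m x * Gam w m (lap w m f) f x)"
    by (simp add: Gam2_self_eq Gam_commute right_diff_distrib sum_subtractf sum_divide_distrib)
  also have "\<dots> = (\<Sum>x\<in>UNIV. m x * (lap w m f x)\<^sup>2)"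
    by (simp add: sum_lap sum_mult_lap[symmetric] power2_eq_square)
  finally show ?thesis .
qed

lemma sum_Gam_eigenfunction:
  assumes "\<And>x. lap w m g x = - l * g x"
  shows "(\<Sum>x\<in>UNIV. m x * Gam w m g g x) = l * (\<Sum>x\<in>UNIV. m x * (g x)\<^sup>2)"
  using sum_mult_lap[of g g]
  by (simp add: assms sum_distrib_left sum_negf power2_eq_square mult_ac)

lemma sum_Gam2_eigenfunction:
  assumes "\<And>x. lap w m g x = - l * g x"
  shows "(\<Sum>x\<in>UNIV. m x * Gam2 w m g g x) = l\<^sup>2 * (\<Sum>x\<in>UNIV. m x * (g x)\<^sup>2)"
  using sum_Gam2_self[of g] by (simp add: assms sum_distrib_left power_mult_distrib mult_ac)

lemma sum_CD_defect_eigenfunction: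
  assumes "\<And>x. lap w m g x = - l * g x"
  shows "(\<Sum>x\<in>UNIV. m x * (Gam2 w m g g x - K * Gam w m g g x))
       = l * (l - K) * (\<Sum>x\<in>UNIV. m x * (g x)\<^sup>2)"
proof -
  have "(\<Sum>x\<in>UNIV. m x * (Gam2 w m g g x - K * Gam w m g g x))
      = (\<Sum>x\<in>UNIV. m x * Gam2 w m g g x) - K * (\<Sum>x\<in>UNIV. m x * Gam w m g g x)"
    by (simp add: right_diff_distrib sum_subtractf sum_distrib_left mult.left_commute)
  then show ?thesis
    using sum_Gam_eigenfunction[OF assms] sum_Gam2_eigenfunction[OF assms]
    by (simp add: power2_eq_square algebra_simps)
qed

lemma sum_sq_pos: "g y \<noteq> 0 \<Longrightarrow> (\<Sum>x\<in>UNIV. m x * (g x)\<^sup>2) > 0"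
  using m_pos by (intro sum_pos2[where i=y]) auto

lemma sum_CD_defect_nonneg:
  "CD_inf w m K \<Longrightarrow> (\<Sum>x\<in>UNIV. m x * (Gam2 w m f f x - K * Gam w m f f x)) \<ge> 0"
  using m_pos by (intro sum_nonneg mult_nonneg_nonneg) (auto simp: CD_inf_def less_imp_le)

lemma eigenvalue_CD_cases:
  assumes "CD_inf w m K" and eig: "\<And>x. lap w m g x = - l * g x" and "g y \<noteq> 0"
  shows "l = 0 \<or> K \<le> l"
proof -
  have norm: "(\<Sum>x\<in>UNIV. m x * (g x)\<^sup>2) > 0" using sum_sq_pos \<open>g y \<noteq> 0\<close> .
  have "(\<Sum>x\<in>UNIV. m x * Gam w m g g x) \<ge> 0"
    using m_pos Gam_self_nonneg by (intro sum_nonneg) simp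
  then have "l \<ge> 0" using sum_Gam_eigenfunction[OF eig] norm by (simp add: zero_le_mult_iff)
  moreover have "l * (l - K) \<ge> 0"
    using sum_CD_defect_nonneg[OF assms(1), of g] sum_CD_defect_eigenfunction[OF eig] norm
    by (simp add: zero_le_mult_iff)
  ultimately show ?thesis by (auto simp: zero_le_mult_iff)
qed

lemma eigenfunction_CD_extremal:
  assumes "CD_inf w m K" and eig: "\<And>x. lap w m g x = - K * g x"
  shows "CD_extremal w m K g"
proof -
  have "(\<Sum>x\<in>UNIV. m x * (Gam2 w m g g x - K * Gam w m g g x)) = 0"
    using sum_CD_defect_eigenfunction[OF eig] by simp
  then have "\<forall>x\<in>UNIV. m x * (Gam2 w m g g x - K * Gam w m g g x) = 0"
    using assms(1) m_pos by (subst sum_nonneg_eq_0_iff[symmetric]) (auto simp: CD_inf_def)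
  then show ?thesis using m_pos by (auto simp: CD_extremal_def less_le)
qed

lemma Gam_self_eq_0_propagates:
  assumes "Gam2 w m f f x = K * Gam w m f f x" and "Gam w m f f x = 0" and "w x y > 0"
  shows "Gam w m f f y = 0"
proof -
  have const: "w x u * (f u - f x) = 0" for u
    using \<open>Gam w m f f x = 0\<close> by (cases "w x u > 0") (auto simp: Gam_self_eq_0_iff w_pos_iff)
  then have "Gam w m f (lap w m f) x = 0" unfolding Gam_eq const by simp
  then have "lap w m (Gam w m f f) x = 0" using assms(1,2) by (simp add: Gam2_self_eq)
  then have "(\<Sum>u\<in>UNIV. w x u * Gam w m f f u) = 0"
    using m_pos[of x] \<open>Gam w m f f x = 0\<close> by (simp add: lap_eq)
  then have "\<forall>u\<in>UNIV. w x u * Gam w m f f u = 0"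
    using w_nonneg Gam_self_nonneg by (subst sum_nonneg_eq_0_iff[symmetric]) auto
  then show ?thesis using \<open>w x y > 0\<close> by (metis UNIV_I mult_eq_0_iff less_irrefl)
qed

lemma lap_Gam_fun_upd:
  assumes "z \<noteq> x" and "w x z = 0"
  shows "lap w m (Gam w m (g(z := g z + t)) (g(z := g z + t))) x = lap w m (Gam w m g g) x
    + (\<Sum>y\<in>UNIV. w x y * (w y z * (2 * t * (g z - g y) + t\<^sup>2) / (2 * m y))) / m x"
proof -
  define f where "f = g(z := g z + t)"
  have Gam_f: "Gam w m f f y = Gam w m g g y + w y z * (2 * t * (g z - g y) + t\<^sup>2) / (2 * m y)"
    if "y \<noteq> z" for y
    using that Gam_fun_upd[of y z] by (simp add: f_def)
  have "(\<Sum>y\<in>UNIV. w x y * (Gam w m f f y - Gam w m f f x))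
      = (\<Sum>y\<in>UNIV. w x y * (Gam w m g g y - Gam w m g g x)
           + w x y * (w y z * (2 * t * (g z - g y) + t\<^sup>2) / (2 * m y)))"
  proof (intro sum.cong refl)
    fix y show "w x y * (Gam w m f f y - Gam w m f f x) = w x y * (Gam w m g g y - Gam w m g g x)
          + w x y * (w y z * (2 * t * (g z - g y) + t\<^sup>2) / (2 * m y))"
      using assms Gam_f[of x] by (cases "y = z") (simp_all add: Gam_f algebra_simps)
  qed
  then show ?thesis by (simp add: f_def lap_eq sum.distrib add_divide_distrib)
qed

lemma Gam_lap_fun_upd:
  assumes "z \<noteq> x" and "w x z = 0"
  shows "Gam w m (g(z := g z + t)) (lap w m (g(z := g z + t))) x = Gam w m g (lap w m g) x
    + (\<Sum>y\<in>UNIV. w x y * ((g y - g x) * (w y z * t / m y))) / (2 * m x)"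
proof -
  define f where "f = g(z := g z + t)"
  have lap_f: "lap w m f y = lap w m g y + w y z * t / m y" and f_eq: "f y = g y"
    if "y \<noteq> z" for y
    using that lap_fun_upd[of y z] by (simp_all add: f_def)
  have "(\<Sum>y\<in>UNIV. w x y * (f y - f x) * (lap w m f y - lap w m f x))
      = (\<Sum>y\<in>UNIV. w x y * (g y - g x) * (lap w m g y - lap w m g x)
           + w x y * ((g y - g x) * (w y z * t / m y)))"
  proof (intro sum.cong refl)
    fix y show "w x y * (f y - f x) * (lap w m f y - lap w m f x)
        = w x y * (g y - g x) * (lap w m g y - lap w m g x) + w x y * ((g y - g x) * (w y z * t / m y))"
      using assms lap_f[of x] f_eq[of x]
      by (cases "y = z") (simp_all add: lap_f f_eq algebra_simps diff_divide_distrib)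
  qed
  then show ?thesis by (simp add: f_def Gam_eq sum.distrib add_divide_distrib)
qed

lemma Gam2_fun_upd:
  assumes "z \<noteq> x" and "w x z = 0"
  shows "Gam2 w m (g(z := g z + t)) (g(z := g z + t)) x = Gam2 w m g g x
    + (t * (\<Sum>y\<in>UNIV. w x y * w y z / m y * ((g z - g y) - (g y - g x)))
       + t\<^sup>2 * (\<Sum>y\<in>UNIV. w x y * w y z / m y / 2)) / (2 * m x)"
proof -
  define S1 where "S1 = (\<Sum>y\<in>UNIV. w x y * (w y z * (2 * t * (g z - g y) + t\<^sup>2) / (2 * m y)))"
  define S2 where "S2 = (\<Sum>y\<in>UNIV. w x y * ((g y - g x) * (w y z * t / m y)))"
  have "S1 - S2 = (\<Sum>y\<in>UNIV. t * (w x y * w y z / m y * ((g z - g y) - (g y - g x)))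
                               + t\<^sup>2 * (w x y * w y z / m y / 2))"
    unfolding S1_def S2_def sum_subtractf[symmetric]
    by (intro sum.cong refl) (simp add: field_simps power2_eq_square)
  then have "S1 - S2 = t * (\<Sum>y\<in>UNIV. w x y * w y z / m y * ((g z - g y) - (g y - g x)))
                      + t\<^sup>2 * (\<Sum>y\<in>UNIV. w x y * w y z / m y / 2)"
    by (simp add: sum.distrib sum_distrib_left)
  moreover have "Gam2 w m (g(z := g z + t)) (g(z := g z + t)) x = Gam2 w m g g x + (S1 - S2) / (2 * m x)"
    using lap_Gam_fun_upd[OF assms] Gam_lap_fun_upd[OF assms]
    by (simp add: Gam2_self_eq S1_def S2_def diff_divide_distrib add_divide_distrib)
  ultimately show ?thesis by simp
qed

lemma CD_extremal_at_balance:
  assumes "CD_inf w m K" and extremal: "Gam2 w m g g x = K * Gam w m g g x"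
    and "z \<noteq> x" and "w x z = 0"
  shows "(\<Sum>y\<in>UNIV. w x y * w y z / m y * ((g z - g y) - (g y - g x))) = 0"
proof (rule nonneg_linear_quadratic_imp_zero)
  fix t
  let ?A = "\<Sum>y\<in>UNIV. w x y * w y z / m y * ((g z - g y) - (g y - g x))"
  let ?B = "\<Sum>y\<in>UNIV. w x y * w y z / m y / 2"
  let ?f = "g(z := g z + t)"
  have "0 \<le> Gam2 w m ?f ?f x - K * Gam w m ?f ?f x"
    using assms(1) by (simp add: CD_inf_def)
  also have "\<dots> = (?A * t + ?B * t\<^sup>2) / (2 * m x)"
    using Gam2_fun_upd[OF assms(3,4)] Gam_fun_upd[of x z] assms(3,4) extremal
    by (simp add: mult.commute)
  finally show "0 \<le> ?A * t + ?B * t\<^sup>2"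
    using m_pos[of x] by (simp add: zero_le_divide_iff)
qed

end

section \<open>Distance functions on connected graphs\<close>

locale connected_fin_weighted_graph = fin_weighted_graph w m
  for w :: "'v::finite \<Rightarrow> 'v \<Rightarrow> real" and m +
  assumes connected: "connected_graph w"
begin

lemma adj_rtrancl: "(x, y) \<in> (adj w)\<^sup>*"
  using connected by (simp add: connected_graph_def)

lemma comb_dist_walk: "(x, y) \<in> adj w ^^ comb_dist w x y"
proof -
  have "\<exists>n. (x, y) \<in> adj w ^^ n" using adj_rtrancl[of x y] by (simp add: rtrancl_power)
  then show ?thesis unfolding comb_dist_def by (rule LeastI_ex)
qed

lemma comb_dist_le: "(x, y) \<in> adj w ^^ n \<Longrightarrow> comb_dist w x y \<le> n"
  unfolding comb_dist_def by (rule Least_le)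

lemma comb_dist_eq_0_iff: "comb_dist w x y = 0 \<longleftrightarrow> y = x"
proof
  show "comb_dist w x y = 0 \<Longrightarrow> y = x" using comb_dist_walk[of x y] by simp
  show "y = x \<Longrightarrow> comb_dist w x y = 0" using comb_dist_le[of x x 0] by simp
qed

lemma comb_dist_neighbour: "w y z > 0 \<Longrightarrow> comb_dist w x z \<le> comb_dist w x y + 1"
  using comb_dist_le[of x z "Suc (comb_dist w x y)"] relpow_Suc_I[OF comb_dist_walk[of x y], of z]
  by (simp add: adj_def)

lemma comb_dist_Suc_imp_predecessor:
  assumes "comb_dist w x z = Suc k"
  obtains y where "comb_dist w x y = k" and "w y z > 0"
proof -
  from comb_dist_walk[of x z] assms obtain y where "(x, y) \<in> adj w ^^ k" and "w y z > 0"
    by (auto simp: adj_def elim: relpow_Suc_E)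
  moreover from this have "comb_dist w x y \<le> k" by (intro comb_dist_le)
  moreover have "comb_dist w x z \<le> comb_dist w x y + 1" by (rule comb_dist_neighbour) fact
  ultimately show ?thesis using assms that by force
qed

lemma Gam_zero_imp_const:
  assumes "\<And>x. Gam w m f f x = 0"
  shows "f y = f x"
  using adj_rtrancl[of x y]
proof (induction rule: rtrancl_induct)
  case (step y z)
  then show ?case using assms[of y] by (simp add: Gam_self_eq_0_iff adj_def)
qed simp

lemma CD_extremal_Gam_zero:
  assumes "CD_extremal w m K f" and "Gam w m f f x = 0"
  shows "Gam w m f f y = 0"
  using adj_rtrancl[of x y]
proof (induction rule: rtrancl_induct)
  case (step y z)
  then show ?case
    using assms(1) Gam_self_eq_0_propagates[of f y K z] by (simp add: CD_extremal_def adj_def)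
qed (fact assms(2))

lemma CD_extremal_two_steps:
  assumes "CD_inf w m K" and "CD_extremal w m K g"
    and dist_x: "comb_dist w x0 x = j" and dist_z: "comb_dist w x0 z = j + 2"
    and "w x y > 0" and "w y z > 0"
    and g_x: "g x = j" and g_sphere: "\<And>u. comb_dist w x0 u = j + 1 \<Longrightarrow> g u = j + 1"
  shows "g z = j + 2"
proof -
  define c where "c u = w x u * w u z / m u" for u
  have "z \<noteq> x" using dist_x dist_z by auto
  moreover have "w x z = 0"
    using comb_dist_neighbour[of x z x0] dist_x dist_z w_pos_iff by fastforce
  ultimately have balance: "(\<Sum>u\<in>UNIV. c u * ((g z - g u) - (g u - g x))) = 0"
    using CD_extremal_at_balance[OF assms(1), of g x z] assms(2) by (simp add: CD_extremal_def c_def)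
  \<comment> \<open>every common neighbour u of x and z lies on the sphere of radius j + 1\<close>
  have termwise: "c u * ((g z - g u) - (g u - g x)) = c u * (g z - (j + 2))" for u
  proof (cases "c u = 0")
    case False
    then have "w x u > 0" "w u z > 0" by (auto simp: c_def w_pos_iff)
    then have "comb_dist w x0 u = j + 1"
      using comb_dist_neighbour[of x u x0] comb_dist_neighbour[of u z x0] dist_x dist_z by linarith
    then show ?thesis using g_x g_sphere by simp
  qed simp
  from balance have "(\<Sum>u\<in>UNIV. c u) * (g z - (j + 2)) = 0"
    by (simp only: termwise sum_distrib_right)
  moreover have "(\<Sum>u\<in>UNIV. c u) > 0"
    using \<open>w x y > 0\<close> \<open>w y z > 0\<close> by (intro sum_pos2[where i=y]) (auto simp: c_def)
  ultimately show ?thesis by simp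
qed

lemma CD_extremal_eq_comb_dist:
  assumes "CD_inf w m K" and "CD_extremal w m K g"
    and g_root: "g x0 = 0" and g_neighbours: "\<And>y. w x0 y > 0 \<Longrightarrow> g y = 1"
  shows "g z = comb_dist w x0 z"
proof (induction "comb_dist w x0 z" arbitrary: z rule: less_induct)
  case less
  consider "comb_dist w x0 z = 0" | "comb_dist w x0 z = 1" | j where "comb_dist w x0 z = j + 2"
    by (metis One_nat_def add_2_eq_Suc' not0_implies_Suc)
  then show ?case
  proof cases
    case 1
    then show ?thesis using g_root by (simp add: comb_dist_eq_0_iff)
  next
    case 2
    then obtain y where "comb_dist w x0 y = 0" "w y z > 0"
      using comb_dist_Suc_imp_predecessor[of x0 z 0] by auto
    then show ?thesis using 2 g_neighbours by (simp add: comb_dist_eq_0_iff)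
  next
    case 3
    then obtain y where y: "comb_dist w x0 y = j + 1" "w y z > 0"
      using comb_dist_Suc_imp_predecessor[of x0 z "j + 1"] by auto
    then obtain x where x: "comb_dist w x0 x = j" "w x y > 0"
      using comb_dist_Suc_imp_predecessor[of x0 y j] by auto
    have "g x = j" "\<And>u. comb_dist w x0 u = j + 1 \<Longrightarrow> g u = j + 1"
      using less[of x] less[of u for u] x(1) 3 by auto
    then show ?thesis
      using CD_extremal_two_steps[OF assms(1,2) x(1) 3 x(2) y(2)] 3 by simp
  qed
qed

end

section \<open>The spectrum of the Laplacian\<close>

lemma nth_concat_replicate_less_sum:
  fixes xs :: "'a::linorder list"
  assumes "sorted xs" "distinct xs"
    and "i < length (concat (map (\<lambda>x. replicate (c x) x) xs))"
    and "concat (map (\<lambda>x. replicate (c x) x) xs) ! i = v"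
  shows "i < sum_list (map c (filter (\<lambda>x. x \<le> v) xs))"
  using assms
proof (induction xs arbitrary: i)
  case (Cons a xs)
  let ?ys = "concat (map (\<lambda>x. replicate (c x) x) xs)"
  show ?case
  proof (cases "i < c a")
    case True
    then have "a = v" using Cons.prems(4) by (simp add: nth_append)
    then show ?thesis using True by simp
  next
    case False
    then have i: "i - c a < length ?ys" "?ys ! (i - c a) = v"
      using Cons.prems(3,4) by (simp_all add: nth_append)
    then have "v \<in> set ?ys" by (metis nth_mem)
    then have "v \<in> set xs" by auto
    then have "a \<le> v" using Cons.prems(1) by simp
    moreover have "i - c a < sum_list (map c (filter (\<lambda>x. x \<le> v) xs))"
      using Cons.IH[OF _ _ i] Cons.prems(1,2) by simp
    ultimately show ?thesis using False by simp
  qed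
qed simp

definition diag_scale :: "('n \<Rightarrow> real) \<Rightarrow> real ^ 'n \<Rightarrow> real ^ 'n" where
  "diag_scale c u = (\<chi> i. c i * u $ i)"

lemma linear_diag_scale: "linear (diag_scale c)"
  by (rule linearI) (simp_all add: diag_scale_def vec_eq_iff algebra_simps)

text \<open>The symmetrisation \<open>M\<^sup>1\<^sup>/\<^sup>2 (-\<Delta>) M\<^sup>-\<^sup>1\<^sup>/\<^sup>2\<close> of \<open>-\<Delta>\<close>, where \<open>M\<close> is multiplication by
  the measure; it is self-adjoint for the standard inner product on \<open>real ^ 'v\<close>.\<close>
definition sym_neg_lap ::
    "('v::finite \<Rightarrow> 'v \<Rightarrow> real) \<Rightarrow> ('v \<Rightarrow> real) \<Rightarrow> real ^ 'v \<Rightarrow> real ^ 'v" where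
  "sym_neg_lap w m =
     diag_scale (\<lambda>x. sqrt (m x)) \<circ> neg_lap_vec w m \<circ> diag_scale (\<lambda>x. 1 / sqrt (m x))"

context fin_weighted_graph
begin

lemma diag_scale_sqrt_inverse:
  "diag_scale (\<lambda>x. sqrt (m x)) (diag_scale (\<lambda>x. 1 / sqrt (m x)) u) = u"
  "diag_scale (\<lambda>x. 1 / sqrt (m x)) (diag_scale (\<lambda>x. sqrt (m x)) u) = u"
  by (simp_all add: diag_scale_def vec_eq_iff)

lemma inner_sym_neg_lap:
  "sym_neg_lap w m a \<bullet> b
     = - (\<Sum>x\<in>UNIV. m x * (b $ x / sqrt (m x) * lap w m (\<lambda>y. a $ y / sqrt (m y)) x))"
proof -
  have "sqrt (m x) * (- lap w m (\<lambda>y. a $ y / sqrt (m y)) x) * b $ x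
      = - (m x * (b $ x / sqrt (m x) * lap w m (\<lambda>y. a $ y / sqrt (m y)) x))" for x
    using m_pos[of x] by (simp add: field_simps real_sqrt_mult_self)
  then show ?thesis
    by (simp add: sym_neg_lap_def diag_scale_def neg_lap_vec_def inner_vec_def sum_negf[symmetric])
qed

lemma sym_neg_lap_selfadjoint: "sym_neg_lap w m a \<bullet> b = a \<bullet> sym_neg_lap w m b"
proof -
  have "sym_neg_lap w m a \<bullet> b = sym_neg_lap w m b \<bullet> a"
    using sum_mult_lap_commute[of "\<lambda>y. b $ y / sqrt (m y)" "\<lambda>y. a $ y / sqrt (m y)"]
    by (simp only: inner_sym_neg_lap)
  then show ?thesis by (simp add: inner_commute)
qed

lemma linear_sym_neg_lap: "linear (sym_neg_lap w m)"
  unfolding sym_neg_lap_def by (intro linear_compose linear_diag_scale linear_neg_lap_vec)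

lemma eigenvalues_nl_eq_sym:
  "eigenvalues_nl w m = {c. \<exists>v. v \<noteq> 0 \<and> sym_neg_lap w m v = c *\<^sub>R v}"
  and dim_eigenspace_nl_eq_sym:
  "dim (eigenspace_nl w m c) = dim {v. sym_neg_lap w m v = c *\<^sub>R v}"
  using conjugate_eigenvalues_and_dims[OF linear_diag_scale linear_diag_scale
      diag_scale_sqrt_inverse, of "neg_lap_vec w m"]
  by (simp_all add: eigenvalues_nl_def eigenspace_nl_def sym_neg_lap_def)

lemma finite_eigenvalues_nl: "finite (eigenvalues_nl w m)"
  unfolding eigenvalues_nl_eq_sym
  by (rule selfadjoint_finite_eigenvalues[OF sym_neg_lap_selfadjoint])

lemma length_eig_list: "CARD('v) \<le> length (eig_list w m)"
proof -
  have "length (eig_list w m) = (\<Sum>c\<in>eigenvalues_nl w m. dim (eigenspace_nl w m c))"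
    using finite_eigenvalues_nl
    by (simp add: eig_list_def length_concat o_def sum_list_distinct_conv_sum_set)
  also have "\<dots> = (\<Sum>c\<in>{c. \<exists>v. v \<noteq> 0 \<and> sym_neg_lap w m v = c *\<^sub>R v}.
                       dim {v. sym_neg_lap w m v = c *\<^sub>R v})"
    by (simp add: eigenvalues_nl_eq_sym dim_eigenspace_nl_eq_sym)
  finally show ?thesis
    using selfadjoint_DIM_le_sum_dim_eigenspaces[OF linear_sym_neg_lap sym_neg_lap_selfadjoint] by simp
qed

lemma deg_le_deg_max: "deg w x \<le> deg_max w"
  unfolding deg_max_def by (rule Max_ge) auto

lemma deg_max_less_CARD: "deg_max w < CARD('v)"
proof -
  have "deg_max w \<in> range (deg w)" unfolding deg_max_def by (rule Max_in) auto
  then obtain x where "deg_max w = deg w x" by blast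
  moreover have "x \<notin> {y. w x y > 0}"
    using weighted_graph by (simp add: weighted_graph_def)
  then have "{y. w x y > 0} \<subset> UNIV" by blast
  ultimately show ?thesis by (simp add: deg_def psubset_card_mono)
qed


lemma eigenvalue_nl_CD_cases:
  assumes "CD_inf w m K" and "c \<in> eigenvalues_nl w m"
  shows "c = 0 \<or> K \<le> c"
proof -
  obtain f where "f \<noteq> 0" "f \<in> eigenspace_nl w m c"
    using assms(2) by (auto simp: eigenvalues_nl_def eigenspace_nl_def)
  moreover from \<open>f \<noteq> 0\<close> obtain y where "f $ y \<noteq> 0" by (auto simp: vec_eq_iff)
  ultimately show ?thesis
    using eigenvalue_CD_cases[OF assms(1), of "\<lambda>y. f $ y" c y] by (simp add: eigenspace_nl_iff)
qed

end

context connected_fin_weighted_graph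
begin

lemma harmonic_const:
  assumes "\<And>x. lap w m f x = 0"
  shows "f y = f x"
proof (rule Gam_zero_imp_const)
  have "(\<Sum>x\<in>UNIV. m x * Gam w m f f x) = 0"
    using sum_Gam_eigenfunction[of f 0] assms by simp
  then have "\<forall>x\<in>UNIV. m x * Gam w m f f x = 0"
    using Gam_self_nonneg by (subst sum_nonneg_eq_0_iff[symmetric]) auto
  then show "Gam w m f f x = 0" for x by simp
qed

lemma dim_eigenspace_nl_0: "dim (eigenspace_nl w m 0) \<le> 1"
proof -
  define one :: "real ^ 'v" where "one = (\<chi> x. 1)"
  have "eigenspace_nl w m 0 \<subseteq> span {one}"
  proof
    fix f assume "f \<in> eigenspace_nl w m 0"
    then have "f $ y = f $ x" for x y
      by (intro harmonic_const[of "\<lambda>y. f $ y"]) (simp add: eigenspace_nl_iff)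
    then have "f = f $ undefined *\<^sub>R one" by (simp add: one_def vec_eq_iff)
    then show "f \<in> span {one}" by (metis span_base span_scale singletonI)
  qed
  then have "dim (eigenspace_nl w m 0) \<le> card {one}" by (intro dim_le_card) auto
  then show ?thesis by simp
qed

lemma deg_max_le_dim_eigenspace:
  assumes "CD_inf w m K" and "K > 0" and eig_list_K: "eig_list w m ! deg_max w = K"
  shows "deg_max w \<le> dim (eigenspace_nl w m K)"
proof -
  let ?d = "\<lambda>c. dim (eigenspace_nl w m c)"
  have "deg_max w < length (eig_list w m)"
    using deg_max_less_CARD length_eig_list by linarith
  then have "deg_max w
      < sum_list (map ?d (filter (\<lambda>c. c \<le> K) (sorted_list_of_set (eigenvalues_nl w m))))"
    using nth_concat_replicate_less_sum[of _ _ ?d] eig_list_K by (simp add: eig_list_def)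
  also have "\<dots> = sum ?d {c \<in> eigenvalues_nl w m. c \<le> K}"
    using finite_eigenvalues_nl by (simp add: sum_list_distinct_conv_sum_set)
  also have "\<dots> \<le> sum ?d {0, K}"
  proof (rule sum_mono2)
    show "{c \<in> eigenvalues_nl w m. c \<le> K} \<subseteq> {0, K}"
      using eigenvalue_nl_CD_cases[OF assms(1)] by fastforce
  qed auto
  also have "\<dots> \<le> 1 + ?d K" using \<open>K > 0\<close> dim_eigenspace_nl_0 by simp
  finally show ?thesis by simp
qed

lemma eigenvector_flat_at_vertex_eq_0:
  assumes "CD_inf w m K" and "K > 0" and "d \<in> eigenspace_nl w m K"
    and flat_x0: "\<And>y. w x0 y > 0 \<Longrightarrow> d $ y = d $ x0"
  shows "d = 0"
proof -
  have eig: "lap w m (\<lambda>y. d $ y) x = - K * d $ x" for x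
    using assms(3) by (simp add: eigenspace_nl_iff)
  have "Gam w m (\<lambda>y. d $ y) (\<lambda>y. d $ y) x0 = 0"
    using flat_x0 by (simp add: Gam_self_eq_0_iff)
  then have "Gam w m (\<lambda>y. d $ y) (\<lambda>y. d $ y) x = 0" for x
    using CD_extremal_Gam_zero eigenfunction_CD_extremal[OF assms(1) eig] by blast
  then have const: "d $ x = d $ x0" for x by (rule Gam_zero_imp_const)
  then have flat: "d $ y - d $ x0 = 0" for y by simp
  have "lap w m (\<lambda>y. d $ y) x0 = 0" unfolding lap_eq flat by simp
  then have "d $ x0 = 0" using eig[of x0] \<open>K > 0\<close> by simp
  then show "d = 0" using const by (simp add: vec_eq_iff)
qed

lemma eigenfunction_with_unit_increments:
  assumes "CD_inf w m K" and "K > 0" and "deg w x0 \<le> dim (eigenspace_nl w m K)"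
  obtains e where "e \<in> eigenspace_nl w m K" and "\<And>y. w x0 y > 0 \<Longrightarrow> e $ y - e $ x0 = 1"
proof -
  let ?E = "eigenspace_nl w m K"
  define R :: "real ^ 'v \<Rightarrow> real ^ 'v" where
    "R e = (\<chi> z. if w x0 z > 0 then e $ z - e $ x0 else 0)" for e
  define T :: "(real ^ 'v) set" where "T = {v. \<forall>z. z \<notin> {y. w x0 y > 0} \<longrightarrow> v $ z = 0}"
  have lin: "linear R" by (rule linearI) (simp_all add: R_def vec_eq_iff algebra_simps)
  have "inj_on R ?E"
  proof (subst linear_injective_on_subspace_0[OF lin subspace_eigenspace_nl], intro ballI impI)
    fix d assume "d \<in> ?E" "R d = 0"
    moreover have "d $ y = d $ x0" if "w x0 y > 0" for y
      using arg_cong[where f = "\<lambda>v. v $ y", OF \<open>R d = 0\<close>] that by (simp add: R_def)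
    ultimately show "d = 0" using eigenvector_flat_at_vertex_eq_0[OF assms(1,2)] by blast
  qed
  then have "dim (R ` ?E) = dim ?E"
    using dim_image_eq[OF lin] subspace_eigenspace_nl by (metis span_eq_iff)
  moreover have "dim T \<le> deg w x0"
    unfolding T_def deg_def by (rule dim_vanishing_outside_le)
  moreover have "R ` ?E \<subseteq> T" by (auto simp: R_def T_def)
  moreover have "subspace T" by (auto simp: T_def subspace_def)
  moreover have "subspace (R ` ?E)" by (rule linear_subspace_image[OF lin subspace_eigenspace_nl])
  ultimately have "R ` ?E = T" using assms(3) by (intro subspace_dim_equal) auto
  moreover have "(\<chi> z. if w x0 z > 0 then 1 else 0) \<in> T" by (simp add: T_def)
  ultimately obtain e where "e \<in> ?E" and Re: "R e = (\<chi> z. if w x0 z > 0 then 1 else 0)" by force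
  moreover have "e $ y - e $ x0 = 1" if "w x0 y > 0" for y
    using arg_cong[where f = "\<lambda>v. v $ y", OF Re] that by (simp add: R_def)
  ultimately show ?thesis using that by blast
qed

lemma comb_dist_CD_extremal:
  assumes "CD_inf w m K" and "K > 0" and "deg w x0 \<le> dim (eigenspace_nl w m K)"
  shows "CD_extremal w m K (\<lambda>x. real (comb_dist w x0 x))"
proof -
  obtain e where "e \<in> eigenspace_nl w m K" and unit: "\<And>y. w x0 y > 0 \<Longrightarrow> e $ y - e $ x0 = 1"
    using eigenfunction_with_unit_increments[OF assms] by blast
  then have "CD_extremal w m K (\<lambda>y. e $ y)"
    by (intro eigenfunction_CD_extremal[OF assms(1)]) (simp add: eigenspace_nl_iff)
  then have extremal: "CD_extremal w m K (\<lambda>y. e $ y + - e $ x0)"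
    by (simp only: CD_extremal_add_const)
  have "e $ z - e $ x0 = comb_dist w x0 z" for z
    using CD_extremal_eq_comb_dist[OF assms(1) extremal] unit by simp
  then show ?thesis using extremal by simp
qed

end

theorem lemma3:
  fixes w :: "'v::finite \<Rightarrow> 'v \<Rightarrow> real" and m :: "'v \<Rightarrow> real" and K :: real
  assumes "weighted_graph w m"
    and "connected_graph w"
    and "K > 0"
    and "CD_inf w m K"
    and "eig_list w m ! deg_max w = K"
  shows "\<forall>x0 y. Gam2 w m (\<lambda>x. real (comb_dist w x0 x)) (\<lambda>x. real (comb_dist w x0 x)) y
               = K * Gam w m (\<lambda>x. real (comb_dist w x0 x)) (\<lambda>x. real (comb_dist w x0 x)) y"
proof (intro allI)
  fix x0 y
  interpret connected_fin_weighted_graph w m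
    using assms(1,2) by unfold_locales
  have "deg w x0 \<le> dim (eigenspace_nl w m K)"
    using deg_le_deg_max deg_max_le_dim_eigenspace[OF assms(4,3,5)] by (rule order_trans)
  then show "Gam2 w m (\<lambda>x. real (comb_dist w x0 x)) (\<lambda>x. real (comb_dist w x0 x)) y
               = K * Gam w m (\<lambda>x. real (comb_dist w x0 x)) (\<lambda>x. real (comb_dist w x0 x)) y"
    using comb_dist_CD_extremal[OF assms(4,3)] by (simp add: CD_extremal_def)
qed

end
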